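(* Let the hypotheses of the existence theorem hold (Assumption (A), $q\in[0,1)$, $l\ge0$, $S_H>0$, positive epidemiological parameters, $\hat R_e h(p(0),q)>1$), let $n=1$, $k>0$, and suppose system (O) has an equilibrium $(I_H^*,I_M^*,J^* )$ with $I_H^*>0$. Let $\delta:=-f'(I_H^* )\hat R_eI_H^*$ (so $\delta>0$). Then the eigenvalues of the Jacobian at this equilibrium are the roots of $$\lambda^3+(\gamma+\mu+k)\lambda^2+k(\gamma+\mu+\gamma\delta)\lambda+2\mu k\gamma\delta=0,$$ and: (i) the equilibrium is locally asymptotically stable if and only if $k>-\dfrac{\gamma\delta(\gamma-\mu)+(\gamma+\mu)^2}{\gamma+\mu+\gamma\delta}$; (ii) if equality holds, the cubic has exactly one negative real root and two nonzero purely imaginary complex-conjugate roots; (iii) if the reverse strict inequality holds, the equilibrium is unstable and the cubic has exactly one negative real root and two complex-conjugate roots with positive real part.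
   Context: Assumption (A): $a,w:[0,\infty)\to(0,\infty)$ are continuously differentiable with $a'(x)>0$ and $w'(x)\le0$ for all $x\ge0$. Let $c(p,q):=1-p(1-q)$, $p(x):=a(x)/(a(x)+w(x))$, $h(p,q):=c(p,q)/(c(p,q)+l)$, $f(x):=h(p(x),q)$, and $\hat R_e:=\sqrt{\frac{\beta_{H\leftarrow M}\beta_{M\leftarrow H}}{\gamma\mu}\rho S_H}$. For $n=1$, system (O) is, with $S_H>0$ fixed, $$\dot I_H=\beta_{H\leftarrow M}\rho S_H f(J)I_M-\gamma I_H,\qquad \dot I_M=\beta_{M\leftarrow H}f(J)I_H-\mu I_M,\qquad \dot J=kI_H-kJ.$$ *)

theory Defs
  imports "HOL-Analysis.Analysis"
begin

definition c_fun :: "real \<Rightarrow> real \<Rightarrow> real" where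
  "c_fun p q = 1 - p * (1 - q)"

definition h_fun :: "real \<Rightarrow> real \<Rightarrow> real \<Rightarrow> real" where
  "h_fun l p q = c_fun p q / (c_fun p q + l)"

definition p_fun :: "(real \<Rightarrow> real) \<Rightarrow> (real \<Rightarrow> real) \<Rightarrow> real \<Rightarrow> real" where
  "p_fun a w x = a x / (a x + w x)"

definition f_fun :: "(real \<Rightarrow> real) \<Rightarrow> (real \<Rightarrow> real) \<Rightarrow> real \<Rightarrow> real \<Rightarrow> real \<Rightarrow> real" where
  "f_fun a w q l x = h_fun l (p_fun a w x) q"

definition Rhat_e :: "real \<Rightarrow> real \<Rightarrow> real \<Rightarrow> real \<Rightarrow> real \<Rightarrow> real \<Rightarrow> real" where
  "Rhat_e bHM bMH \<gamma> \<mu> \<rho> SH = sqrt (bHM * bMH / (\<gamma> * \<mu>) * \<rho> * SH)"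

text \<open>Vector field of system (O) for n = 1; state X = (I_H, I_M, J).\<close>

definition fieldO :: "(real \<Rightarrow> real) \<Rightarrow> real \<Rightarrow> real \<Rightarrow> real \<Rightarrow> real \<Rightarrow> real
      \<Rightarrow> real \<Rightarrow> real \<Rightarrow> real^3 \<Rightarrow> real^3" where
  "fieldO f bHM bMH \<rho> SH \<gamma> \<mu> k X =
     vector [bHM * \<rho> * SH * f (X$3) * X$2 - \<gamma> * X$1,
             bMH * f (X$3) * X$1 - \<mu> * X$2,
             k * X$1 - k * X$3]"

definition jacobian_at :: "(real^3 \<Rightarrow> real^3) \<Rightarrow> real^3 \<Rightarrow> real^3^3" where
  "jacobian_at F X = matrix (frechet_derivative F (at X))"

definition is_eigenvalue :: "real^3^3 \<Rightarrow> complex \<Rightarrow> bool" where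
  "is_eigenvalue A z \<longleftrightarrow>
     (\<exists>v::complex^3. v \<noteq> 0 \<and> (\<chi> i j. complex_of_real (A$i$j)) *v v = z *s v)"

definition lin_asympt_stable :: "real^3^3 \<Rightarrow> bool" where
  "lin_asympt_stable A \<longleftrightarrow> (\<forall>z. is_eigenvalue A z \<longrightarrow> Re z < 0)"

definition lin_unstable :: "real^3^3 \<Rightarrow> bool" where
  "lin_unstable A \<longleftrightarrow> (\<exists>z. is_eigenvalue A z \<and> Re z > 0)"

end

theory Submission
  imports Defs
begin

text \<open>
  At an equilibrium with \<open>I\<^sub>H > 0\<close> one has \<open>J = I\<^sub>H\<close>, and multiplying the two infection
  equations gives \<open>Rhat_e f(I\<^sub>H) = 1\<close>. With this relation the characteristic polynomial of the
  Jacobian becomes \<open>\<lambda>\<^sup>3 + a\<^sub>2\<lambda>\<^sup>2 + a\<^sub>1\<lambda> + a\<^sub>0\<close> with \<open>a\<^sub>2 = \<gamma> + \<mu> + k\<close>,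
  \<open>a\<^sub>1 = k(\<gamma> + \<mu> + \<gamma>\<delta>)\<close>, \<open>a\<^sub>0 = 2\<mu>k\<gamma>\<delta>\<close>; these are positive because \<open>f\<close> is strictly
  decreasing, which needs \<open>l > 0\<close>, and \<open>l = 0\<close> would make \<open>f = 1\<close> and contradict
  \<open>Rhat_e h(p(0), q) > 1\<close>.

  A real monic cubic with positive coefficients has a negative root \<open>r\<close>. Dividing by
  \<open>\<lambda> - r\<close> leaves \<open>\<lambda>\<^sup>2 + b\<lambda> + c\<close> with \<open>c > 0\<close> and \<open>a\<^sub>2a\<^sub>1 - a\<^sub>0 = b(a\<^sub>1 + r\<^sup>2)\<close>, so the sign of
  the Hurwitz determinant \<open>a\<^sub>2a\<^sub>1 - a\<^sub>0\<close> is the sign of \<open>b\<close>, i.e. of minus the real part of the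
  two remaining roots. These roots are non-real unless they have negative real part, because the cubic has
  no nonnegative real root. Finally \<open>a\<^sub>2a\<^sub>1 - a\<^sub>0 = k(\<gamma> + \<mu> + \<gamma>\<delta>)(k - k\<^sub>c)\<close>.
\<close>

definition monic_cubic :: "real \<Rightarrow> real \<Rightarrow> real \<Rightarrow> 'a::real_field \<Rightarrow> 'a" where
  "monic_cubic a2 a1 a0 z = z ^ 3 + of_real a2 * z ^ 2 + of_real a1 * z + of_real a0"

lemma monic_cubic_pos:
  fixes x :: real
  assumes "a2 > 0" "a1 > 0" "a0 > 0" "x \<ge> 0"
  shows "monic_cubic a2 a1 a0 x > 0"
  using assms by (simp add: monic_cubic_def add_nonneg_pos)

lemma monic_cubic_has_negative_root:
  assumes "a2 > 0" "a1 > 0" "a0 > 0"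
  obtains r :: real where "r < 0" "monic_cubic a2 a1 a0 r = 0"
proof -
  define M where "M = 1 + a2 + a0"
  have "M \<ge> 1" using assms by (simp add: M_def)
  then have "a0 \<le> a0 * M ^ 2" "a1 * M > 0" "M ^ 2 > 0"
    using assms by (simp_all add: mult_le_cancel_left1 one_le_power)
  moreover have "monic_cubic a2 a1 a0 (-M) = - (M ^ 2) - (a0 * M ^ 2 - a0) - a1 * M"
    by (simp add: monic_cubic_def M_def power2_eq_square power3_eq_cube algebra_simps)
  ultimately have "monic_cubic a2 a1 a0 (-M) \<le> 0"
    by linarith
  moreover have "continuous_on {-M..0} (monic_cubic a2 a1 a0 :: real \<Rightarrow> real)"
    unfolding monic_cubic_def by (intro continuous_intros)
  ultimately obtain r where "-M \<le> r" "r \<le> 0" "monic_cubic a2 a1 a0 r = 0"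
    using IVT'[of "monic_cubic a2 a1 a0" "-M" 0 0] \<open>M \<ge> 1\<close> monic_cubic_pos[OF assms, of 0]
    by auto
  moreover have "r \<noteq> 0"
    using \<open>monic_cubic a2 a1 a0 r = 0\<close> assms by (auto simp: monic_cubic_def)
  ultimately show thesis
    by (intro that) (simp_all add: less_le)
qed

lemma monic_cubic_factor:
  fixes z :: "'a::real_field"
  assumes "monic_cubic a2 a1 a0 r = 0" "r \<noteq> 0"
  shows "monic_cubic a2 a1 a0 z
           = (z - of_real r) * (z ^ 2 + of_real (a2 + r) * z + of_real (- a0 / r))"
proof -
  define c where "c = - a0 / r"
  have a0: "a0 = - (r * c)" and a1: "a1 = c - r * (a2 + r)"
    using assms by (simp_all add: c_def monic_cubic_def field_simps power2_eq_square power3_eq_cube)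
  show ?thesis
    unfolding c_def[symmetric] monic_cubic_def a0 a1 using assms(2)
    by (simp add: algebra_simps power2_eq_square power3_eq_cube)
qed

lemma monic_cubic_hurwitz_margin:
  assumes "monic_cubic a2 a1 a0 r = 0"
  shows "a2 * a1 - a0 = (a2 + r) * (a1 + r ^ 2)"
  using assms by (simp add: monic_cubic_def algebra_simps power2_eq_square power3_eq_cube)

lemma quadratic_root_Re_neg:
  fixes z :: complex
  assumes "b > 0" "c > 0" "z ^ 2 + of_real b * z + of_real c = 0"
  shows "Re z < 0"
proof -
  have re: "Re z ^ 2 - Im z ^ 2 + b * Re z + c = 0"
    using arg_cong[OF assms(3), of Re] by (simp add: power2_eq_square)
  have im: "Im z * (2 * Re z + b) = 0"
    using arg_cong[OF assms(3), of Im] by (simp add: power2_eq_square algebra_simps)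
  show ?thesis
  proof (cases "Im z = 0")
    case True
    show ?thesis
    proof (rule ccontr)
      assume "\<not> Re z < 0"
      then have "Re z ^ 2 + b * Re z + c > 0"
        using assms(1,2) by (simp add: add_nonneg_pos)
      with re True show False by simp
    qed
  next
    case False
    with im assms show ?thesis by simp
  qed
qed

lemma quadratic_factor_conjugate:
  fixes z :: complex
  assumes "\<beta> ^ 2 = c - b ^ 2 / 4"
  shows "z ^ 2 + of_real b * z + of_real c = (z - Complex (- b / 2) \<beta>) * (z - Complex (- b / 2) (- \<beta>))"
proof -
  have "c = (b / 2) ^ 2 + \<beta> ^ 2"
    using assms by (simp add: power_divide)
  then show ?thesis
    by (simp add: complex_eq_iff power2_eq_square algebra_simps)
qed

lemma monic_cubic_roots_Re_neg:
  fixes z :: complex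
  assumes "a2 > 0" "a1 > 0" "a0 > 0" "a0 < a2 * a1" "monic_cubic a2 a1 a0 z = 0"
  shows "Re z < 0"
proof -
  obtain r :: real where r: "r < 0" "monic_cubic a2 a1 a0 r = 0"
    using monic_cubic_has_negative_root[OF assms(1-3)] .
  have "0 < (a2 + r) * (a1 + r ^ 2)"
    using monic_cubic_hurwitz_margin[OF r(2)] assms(4) by linarith
  moreover have "a1 + r ^ 2 > 0"
    using assms(2) by (simp add: add_pos_nonneg)
  ultimately have "a2 + r > 0"
    by (simp add: zero_less_mult_iff)
  moreover have "- a0 / r > 0"
    using r(1) assms(3) by (simp add: divide_pos_neg)
  moreover have "z = of_real r \<or> z ^ 2 + of_real (a2 + r) * z + of_real (- a0 / r) = 0"
    using assms(5) unfolding monic_cubic_factor[OF r(2) less_imp_neq[OF r(1)]] by simp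
  ultimately show ?thesis
    using quadratic_root_Re_neg[of "a2 + r" "- a0 / r" z] r(1) by auto
qed

lemma monic_cubic_roots_conjugate_pair:
  assumes "a2 > 0" "a1 > 0" "a0 > 0" "a2 * a1 \<le> a0"
  obtains r \<alpha> \<beta> where "r < 0" "\<beta> > 0" "2 * \<alpha> * (a1 + r ^ 2) = a0 - a2 * a1"
    "{z::complex. monic_cubic a2 a1 a0 z = 0} = {of_real r, Complex \<alpha> \<beta>, Complex \<alpha> (- \<beta>)}"
proof -
  obtain r :: real where r: "r < 0" "monic_cubic a2 a1 a0 r = 0"
    using monic_cubic_has_negative_root[OF assms(1-3)] .
  define b c where "b = a2 + r" and "c = - a0 / r"
  have factor: "monic_cubic a2 a1 a0 z = (z - of_real r) * (z ^ 2 + of_real b * z + of_real c)"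
    for z :: "'a::real_field"
    using monic_cubic_factor[OF r(2)] r(1) by (simp add: b_def c_def)
  have margin: "a2 * a1 - a0 = b * (a1 + r ^ 2)"
    using monic_cubic_hurwitz_margin[OF r(2)] by (simp add: b_def)
  have "a1 + r ^ 2 > 0"
    using assms(2) by (simp add: add_pos_nonneg)
  moreover have "b * (a1 + r ^ 2) \<le> 0"
    using margin assms(4) by linarith
  ultimately have "b \<le> 0"
    by (simp add: mult_le_0_iff)
  \<comment> \<open>The cubic is positive on the nonnegative reals, so the quadratic factor is positive at its vertex.\<close>
  have "0 < monic_cubic a2 a1 a0 (- b / 2)"
    using monic_cubic_pos assms(1-3) \<open>b \<le> 0\<close> by simp
  then have "0 < (- b / 2) ^ 2 + b * (- b / 2) + c"
    unfolding factor using r(1) \<open>b \<le> 0\<close> by (simp add: zero_less_mult_iff)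
  then have disc: "c - b ^ 2 / 4 > 0"
    by (simp add: power2_eq_square)
  define \<beta> where "\<beta> = sqrt (c - b ^ 2 / 4)"
  have "\<beta> > 0" and \<beta>2: "\<beta> ^ 2 = c - b ^ 2 / 4"
    using disc by (simp_all add: \<beta>_def)
  have "monic_cubic a2 a1 a0 z = (z - of_real r) * ((z - Complex (- b / 2) \<beta>) * (z - Complex (- b / 2) (- \<beta>)))"
    for z :: complex
    by (simp only: factor quadratic_factor_conjugate[OF \<beta>2])
  then have "{z::complex. monic_cubic a2 a1 a0 z = 0} = {of_real r, Complex (- b / 2) \<beta>, Complex (- b / 2) (- \<beta>)}"
    by auto
  moreover have "2 * (- b / 2) * (a1 + r ^ 2) = a0 - a2 * a1"
    using margin by simp
  ultimately show thesis
    by (rule that[OF r(1) \<open>\<beta> > 0\<close>, rotated])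
qed

lemma monic_cubic_stable_iff:
  assumes "a2 > 0" "a1 > 0" "a0 > 0"
  shows "(\<forall>z::complex. monic_cubic a2 a1 a0 z = 0 \<longrightarrow> Re z < 0) \<longleftrightarrow> a0 < a2 * a1"
proof
  assume stable: "\<forall>z::complex. monic_cubic a2 a1 a0 z = 0 \<longrightarrow> Re z < 0"
  show "a0 < a2 * a1"
  proof (rule ccontr)
    assume "\<not> a0 < a2 * a1"
    then have "a2 * a1 \<le> a0"
      by simp
    then obtain r \<alpha> \<beta> where "r < 0" "\<beta> > 0" and margin: "2 * \<alpha> * (a1 + r ^ 2) = a0 - a2 * a1"
      and roots: "{z::complex. monic_cubic a2 a1 a0 z = 0} = {of_real r, Complex \<alpha> \<beta>, Complex \<alpha> (- \<beta>)}"
      by (rule monic_cubic_roots_conjugate_pair[OF assms])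
    have "0 \<le> \<alpha> * (a1 + r ^ 2)"
      using margin \<open>\<not> a0 < a2 * a1\<close> by simp
    moreover have "a1 + r ^ 2 > 0"
      using assms(2) by (simp add: add_pos_nonneg)
    ultimately have "\<alpha> \<ge> 0"
      by (simp add: zero_le_mult_iff)
    moreover have "monic_cubic a2 a1 a0 (Complex \<alpha> \<beta>) = 0"
      using roots by blast
    ultimately show False
      using stable[rule_format, of "Complex \<alpha> \<beta>"] by simp
  qed
qed (use monic_cubic_roots_Re_neg assms in blast)

lemma monic_cubic_roots_imaginary_pair:
  assumes "a2 > 0" "a1 > 0" "a0 > 0" "a0 = a2 * a1"
  shows "\<exists>r \<omega>. r < 0 \<and> \<omega> > 0 \<and>
    {z::complex. monic_cubic a2 a1 a0 z = 0} = {of_real r, \<i> * of_real \<omega>, - \<i> * of_real \<omega>}"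
proof -
  obtain r \<alpha> \<beta> where "r < 0" "\<beta> > 0" and margin: "2 * \<alpha> * (a1 + r ^ 2) = a0 - a2 * a1"
    and roots: "{z::complex. monic_cubic a2 a1 a0 z = 0} = {of_real r, Complex \<alpha> \<beta>, Complex \<alpha> (- \<beta>)}"
    using monic_cubic_roots_conjugate_pair[OF assms(1-3) eq_refl[OF assms(4)[symmetric]]] .
  have "a1 + r ^ 2 > 0"
    using assms(2) by (simp add: add_pos_nonneg)
  then have "\<alpha> = 0"
    using margin assms(4) by simp
  then show ?thesis
    using roots \<open>r < 0\<close> \<open>\<beta> > 0\<close> by (auto simp: Complex_eq)
qed

lemma monic_cubic_roots_unstable_pair:
  assumes "a2 > 0" "a1 > 0" "a0 > 0" "a2 * a1 < a0"
  shows "\<exists>r \<alpha> \<beta>. r < 0 \<and> \<alpha> > 0 \<and> \<beta> > 0 \<and>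
    {z::complex. monic_cubic a2 a1 a0 z = 0} = {of_real r, Complex \<alpha> \<beta>, Complex \<alpha> (- \<beta>)}"
proof -
  obtain r \<alpha> \<beta> where "r < 0" "\<beta> > 0" and margin: "2 * \<alpha> * (a1 + r ^ 2) = a0 - a2 * a1"
    and roots: "{z::complex. monic_cubic a2 a1 a0 z = 0} = {of_real r, Complex \<alpha> \<beta>, Complex \<alpha> (- \<beta>)}"
    using monic_cubic_roots_conjugate_pair[OF assms(1-3) less_imp_le[OF assms(4)]] .
  have "0 < \<alpha> * (a1 + r ^ 2)"
    using margin assms(4) by simp
  moreover have "a1 + r ^ 2 > 0"
    using assms(2) by (simp add: add_pos_nonneg)
  ultimately have "\<alpha> > 0"
    by (simp add: zero_less_mult_iff)
  then show ?thesis
    using roots \<open>r < 0\<close> \<open>\<beta> > 0\<close> by blast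
qed

lemma c_fun_pos:
  assumes "0 \<le> p" "p < 1" "0 \<le> q"
  shows "c_fun p q > 0"
proof -
  have "p * (1 - q) \<le> p"
    using assms by (simp add: mult_left_le)
  then show ?thesis
    using assms(2) by (simp add: c_fun_def)
qed

lemma c_fun_p_fun_pos:
  assumes "a x > 0" "w x > 0" "0 \<le> q"
  shows "c_fun (p_fun a w x) q > 0"
  using assms by (intro c_fun_pos) (simp_all add: p_fun_def)

lemma f_fun_pos:
  assumes "a x > 0" "w x > 0" "0 \<le> q" "0 \<le> l"
  shows "f_fun a w q l x > 0"
  using c_fun_p_fun_pos[of a x w q, OF assms(1-3)] assms(4) by (simp add: f_fun_def h_fun_def)

lemma f_fun_l_zero:
  assumes "a x > 0" "w x > 0" "0 \<le> q"
  shows "f_fun a w q 0 x = 1"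
  using c_fun_p_fun_pos[of a x w q, OF assms] by (simp add: f_fun_def h_fun_def)

lemma l_nonzero_if_above_threshold:
  assumes "a x > 0" "w x > 0" "a 0 > 0" "w 0 > 0" "0 \<le> q"
    and "R * f_fun a w q l x = 1" "R * h_fun l (p_fun a w 0) q > 1"
  shows "l \<noteq> 0"
proof
  assume "l = 0"
  then have "f_fun a w q l x = 1" "h_fun l (p_fun a w 0) q = 1"
    using f_fun_l_zero[of a x w q] f_fun_l_zero[of a 0 w q] assms(1-5) by (simp_all add: f_fun_def)
  with assms(6,7) show False
    by simp
qed

lemma p_fun_has_derivative:
  assumes "(a has_real_derivative a'x) (at x)" "(w has_real_derivative w'x) (at x)" "a x + w x \<noteq> 0"
  shows "(p_fun a w has_real_derivative (a'x * w x - a x * w'x) / (a x + w x) ^ 2) (at x)"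
  unfolding p_fun_def[abs_def]
  by (rule derivative_eq_intros assms | simp add: power2_eq_square algebra_simps)+

lemma h_fun_has_derivative:
  assumes "c_fun p q + l \<noteq> 0"
  shows "((\<lambda>p. h_fun l p q) has_real_derivative - l * (1 - q) / (c_fun p q + l) ^ 2) (at p)"
  using assms unfolding h_fun_def c_fun_def
  by (auto intro!: derivative_eq_intros simp: power2_eq_square field_simps)

lemma f_fun_has_derivative:
  assumes "(a has_real_derivative a'x) (at x)" "(w has_real_derivative w'x) (at x)"
    and "a x > 0" "w x > 0" "0 \<le> q" "0 \<le> l"
  shows "(f_fun a w q l has_real_derivative
      - l * (1 - q) / (c_fun (p_fun a w x) q + l) ^ 2 * ((a'x * w x - a x * w'x) / (a x + w x) ^ 2)) (at x)"
proof -
  have "c_fun (p_fun a w x) q + l \<noteq> 0"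
    using c_fun_p_fun_pos[of a x w q, OF assms(3-5)] assms(6) by simp
  moreover have "a x + w x \<noteq> 0"
    using assms(3,4) by simp
  ultimately show ?thesis
    unfolding f_fun_def[abs_def]
    by (rule DERIV_chain2[OF h_fun_has_derivative p_fun_has_derivative[OF assms(1,2)]])
qed

lemma f_fun_deriv_neg:
  assumes "(a has_real_derivative a'x) (at x)" "(w has_real_derivative w'x) (at x)"
    and "a x > 0" "w x > 0" "a'x > 0" "w'x \<le> 0" "0 \<le> q" "q < 1" "0 < l"
  shows "(f_fun a w q l has_real_derivative deriv (f_fun a w q l) x) (at x)"
    and "deriv (f_fun a w q l) x < 0"
proof -
  let ?D = "- l * (1 - q) / (c_fun (p_fun a w x) q + l) ^ 2 * ((a'x * w x - a x * w'x) / (a x + w x) ^ 2)"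
  have D: "(f_fun a w q l has_real_derivative ?D) (at x)"
    using f_fun_has_derivative[OF assms(1-4,7) less_imp_le[OF assms(9)]] .
  then show "(f_fun a w q l has_real_derivative deriv (f_fun a w q l) x) (at x)"
    by (simp add: DERIV_imp_deriv)
  have "c_fun (p_fun a w x) q + l > 0"
    using c_fun_p_fun_pos[of a x w q, OF assms(3,4,7)] assms(9) by simp
  moreover have "a x * w'x \<le> 0" "a'x * w x > 0"
    using assms(3-6) by (simp_all add: mult_nonneg_nonpos)
  ultimately have "?D < 0"
    using assms(3,4,8,9) by (simp add: mult_neg_pos divide_neg_pos)
  then show "deriv (f_fun a w q l) x < 0"
    using DERIV_imp_deriv[OF D] by simp
qed

lemma fieldO_eq_0_iff:
  assumes "k \<noteq> 0"
  shows "fieldO f bHM bMH \<rho> SH \<gamma> \<mu> k (vector [x, y, z]) = 0 \<longleftrightarrow>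
    bHM * \<rho> * SH * f z * y = \<gamma> * x \<and> bMH * f z * x = \<mu> * y \<and> z = x"
  using assms by (auto simp: fieldO_def vec_eq_iff forall_3)

lemma equilibrium_gain:
  fixes \<beta>1 \<beta>2 \<gamma> \<mu> \<phi> x y :: real
  assumes eq1: "\<beta>1 * \<phi> * y = \<gamma> * x" and eq2: "\<beta>2 * \<phi> * x = \<mu> * y"
    and "x > 0" "\<beta>2 > 0" "\<phi> > 0" "\<mu> > 0"
  shows "(\<beta>1 * \<phi>) * (\<beta>2 * \<phi>) = \<gamma> * \<mu>"
proof -
  have "\<mu> * y > 0"
    unfolding eq2[symmetric] using assms(3-5) by simp
  then have "y > 0"
    using \<open>\<mu> > 0\<close> by (simp add: zero_less_mult_iff)
  have "((\<beta>1 * \<phi>) * (\<beta>2 * \<phi>)) * (x * y) = (\<gamma> * \<mu>) * (x * y)"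
    using arg_cong2[OF eq1 eq2, of "(*)"] by (simp add: algebra_simps)
  then show ?thesis
    using \<open>x > 0\<close> \<open>y > 0\<close> by simp
qed

lemma Rhat_e_mult_eq_1:
  assumes "bHM > 0" "bMH > 0" "\<rho> > 0" "SH > 0" "\<gamma> > 0" "\<mu> > 0" "\<phi> > 0"
    and gain: "(bHM * \<rho> * SH * \<phi>) * (bMH * \<phi>) = \<gamma> * \<mu>"
  shows "Rhat_e bHM bMH \<gamma> \<mu> \<rho> SH * \<phi> = 1"
proof -
  have "(Rhat_e bHM bMH \<gamma> \<mu> \<rho> SH * \<phi>) ^ 2 = 1"
    using gain assms(1-6) by (simp add: Rhat_e_def power_mult_distrib power2_eq_square field_simps)
  moreover have "Rhat_e bHM bMH \<gamma> \<mu> \<rho> SH * \<phi> > 0"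
    using assms(1-7) by (simp add: Rhat_e_def)
  ultimately show ?thesis
    by (simp add: power2_eq_1_iff)
qed

lemma fieldO_equilibrium:
  assumes "bHM > 0" "bMH > 0" "\<rho> > 0" "SH > 0" "\<gamma> > 0" "\<mu> > 0" "k > 0"
    and "fieldO f bHM bMH \<rho> SH \<gamma> \<mu> k (vector [x, y, z]) = 0" "x > 0" "f x > 0"
  shows "z = x" and "bHM * \<rho> * SH * f x * y = \<gamma> * x" and "bMH * f x * x = \<mu> * y"
    and "(bHM * \<rho> * SH * f x) * (bMH * f x) = \<gamma> * \<mu>"
    and "Rhat_e bHM bMH \<gamma> \<mu> \<rho> SH * f x = 1"
proof -
  show "z = x" and eq1: "bHM * \<rho> * SH * f x * y = \<gamma> * x" and eq2: "bMH * f x * x = \<mu> * y"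
    using assms(7,8) by (auto simp: fieldO_eq_0_iff)
  show gain: "(bHM * \<rho> * SH * f x) * (bMH * f x) = \<gamma> * \<mu>"
    using equilibrium_gain[OF eq1 eq2 assms(9,2,10,6)] .
  show "Rhat_e bHM bMH \<gamma> \<mu> \<rho> SH * f x = 1"
    using Rhat_e_mult_eq_1[OF assms(1-6,10) gain] .
qed

lemma jacobian_fieldO:
  assumes "(f has_real_derivative f') (at (X $ 3))"
  shows "jacobian_at (fieldO f bHM bMH \<rho> SH \<gamma> \<mu> k) X =
    vector [vector [- \<gamma>, bHM * \<rho> * SH * f (X $ 3), bHM * \<rho> * SH * f' * X $ 2],
            vector [bMH * f (X $ 3), - \<mu>, bMH * f' * X $ 1],
            vector [k, 0, - k]]"
    (is "_ = ?A")
proof -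
  have component: "((\<lambda>X::real^3. X $ i) has_derivative (\<lambda>h. h $ i)) F" for i F
    by (rule bounded_linear_imp_has_derivative[OF bounded_linear_vec_nth])
  have f3: "((\<lambda>X::real^3. f (X $ 3)) has_derivative (\<lambda>h. f' * h $ 3)) (at X)"
    using has_derivative_compose[OF component assms[unfolded has_field_derivative_def]] .
  have "fieldO f bHM bMH \<rho> SH \<gamma> \<mu> k = (\<lambda>X.
      (bHM * \<rho> * SH * f (X $ 3) * X $ 2 - \<gamma> * X $ 1) *\<^sub>R axis 1 1
    + (bMH * f (X $ 3) * X $ 1 - \<mu> * X $ 2) *\<^sub>R axis 2 1
    + (k * X $ 1 - k * X $ 3) *\<^sub>R axis 3 1)"
    by (simp add: fun_eq_iff fieldO_def vec_eq_iff forall_3 axis_def)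
  moreover have "((\<lambda>X.
      (bHM * \<rho> * SH * f (X $ 3) * X $ 2 - \<gamma> * X $ 1) *\<^sub>R axis 1 1
    + (bMH * f (X $ 3) * X $ 1 - \<mu> * X $ 2) *\<^sub>R axis 2 1
    + (k * X $ 1 - k * X $ 3) *\<^sub>R axis 3 1) has_derivative (\<lambda>h. ?A *v h)) (at X)"
    by (rule has_derivative_eq_rhs,
        (rule has_derivative_add has_derivative_scaleR_left has_derivative_diff has_derivative_mult
          has_derivative_const f3 component)+)
      (simp add: fun_eq_iff vec_eq_iff forall_3 matrix_vector_mult_def sum_3 axis_def algebra_simps)
  ultimately have "(fieldO f bHM bMH \<rho> SH \<gamma> \<mu> k has_derivative (\<lambda>h. ?A *v h)) (at X)"
    by simp
  then show ?thesis
    unfolding jacobian_at_def by (metis frechet_derivative_at matrix_of_matrix_vector_mul)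
qed

lemma det_eq_0_iff_nontrivial_kernel:
  fixes M :: "'a::field ^'n ^'n"
  shows "det M = 0 \<longleftrightarrow> (\<exists>v. v \<noteq> 0 \<and> M *v v = 0)"
  by (metis invertible_det_nz invertible_left_inverse matrix_left_invertible_ker)

lemma is_eigenvalue_iff_det:
  "is_eigenvalue A z \<longleftrightarrow> det ((\<chi> i j. complex_of_real (A $ i $ j)) - mat z) = 0"
proof -
  have "mat z *v v = z *s v" for v :: "complex^3"
    by (simp add: vec_eq_iff matrix_vector_mult_def mat_def forall_3 sum_3)
  then show ?thesis
    unfolding is_eigenvalue_def det_eq_0_iff_nontrivial_kernel matrix_vector_mult_diff_rdistrib
    by simp
qed

lemma is_eigenvalue_char_cubic:
  fixes \<gamma> \<mu> k s1 s2 t1 t2 \<delta> :: real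
  assumes "s1 * s2 = \<gamma> * \<mu>" "t1 = - (\<gamma> * \<delta>)" "s1 * t2 = - (\<gamma> * \<mu> * \<delta>)"
  shows "is_eigenvalue (vector [vector [- \<gamma>, s1, t1], vector [s2, - \<mu>, t2], vector [k, 0, - k]]) z
    \<longleftrightarrow> monic_cubic (\<gamma> + \<mu> + k) (k * (\<gamma> + \<mu> + \<gamma> * \<delta>)) (2 * \<mu> * k * \<gamma> * \<delta>) z = 0"
proof -
  let ?c = complex_of_real
  have "det ((\<chi> i j. ?c
      ((vector [vector [- \<gamma>, s1, t1], vector [s2, - \<mu>, t2], vector [k, 0, - k]] :: real^3^3) $ i $ j))
        - mat z)
    = - ((z + ?c \<gamma>) * (z + ?c \<mu>) * (z + ?c k) - ?c (s1 * s2) * (z + ?c k)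
         - ?c k * ?c (s1 * t2) - ?c k * ?c t1 * (z + ?c \<mu>))"
    unfolding det_3 by (simp add: mat_def) (simp add: algebra_simps)
  also have "\<dots> = - monic_cubic (\<gamma> + \<mu> + k) (k * (\<gamma> + \<mu> + \<gamma> * \<delta>)) (2 * \<mu> * k * \<gamma> * \<delta>) z"
    unfolding assms monic_cubic_def by (simp add: algebra_simps power2_eq_square power3_eq_cube)
  finally show ?thesis
    by (simp add: is_eigenvalue_iff_det)
qed

lemma equilibrium_eigenvalue_iff:
  assumes "bHM > 0" "bMH > 0" "\<rho> > 0" "SH > 0" "\<gamma> > 0" "\<mu> > 0" "k > 0"
    and equil: "fieldO f bHM bMH \<rho> SH \<gamma> \<mu> k (vector [x, y, z]) = 0"
    and "x > 0" "f x > 0" and f': "(f has_real_derivative f') (at x)"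
  defines "\<delta> \<equiv> - f' * Rhat_e bHM bMH \<gamma> \<mu> \<rho> SH * x"
  shows "is_eigenvalue (jacobian_at (fieldO f bHM bMH \<rho> SH \<gamma> \<mu> k) (vector [x, y, z])) \<zeta>
    \<longleftrightarrow> monic_cubic (\<gamma> + \<mu> + k) (k * (\<gamma> + \<mu> + \<gamma> * \<delta>)) (2 * \<mu> * k * \<gamma> * \<delta>) \<zeta> = 0"
proof -
  let ?R = "Rhat_e bHM bMH \<gamma> \<mu> \<rho> SH"
  note equilibrium = fieldO_equilibrium[OF assms(1-10)]
  have t1: "bHM * \<rho> * SH * f' * y = - (\<gamma> * \<delta>)"
  proof -
    have "- (\<gamma> * \<delta>) = f' * ?R * (bHM * \<rho> * SH * f x * y)"
      by (simp add: equilibrium(2) \<delta>_def)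
    also have "\<dots> = bHM * \<rho> * SH * f' * y * (?R * f x)"
      by (simp only: ac_simps)
    finally show ?thesis
      by (simp add: equilibrium(5))
  qed
  have t2: "(bHM * \<rho> * SH * f x) * (bMH * f' * x) = - (\<gamma> * \<mu> * \<delta>)"
  proof -
    have "(bHM * \<rho> * SH * f x) * (bMH * f' * x) = (bHM * \<rho> * SH * f') * (bMH * f x * x)"
      by (simp only: ac_simps)
    also have "\<dots> = (bHM * \<rho> * SH * f') * (\<mu> * y)"
      by (simp only: equilibrium(3))
    also have "\<dots> = \<mu> * (bHM * \<rho> * SH * f' * y)"
      by (simp only: ac_simps)
    finally show ?thesis
      by (simp add: t1)
  qed
  have "(f has_real_derivative f') (at ((vector [x, y, z] :: real^3) $ 3))"
    using f' equilibrium(1) by simp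
  from jacobian_fieldO[OF this] have "jacobian_at (fieldO f bHM bMH \<rho> SH \<gamma> \<mu> k) (vector [x, y, z]) =
    vector [vector [- \<gamma>, bHM * \<rho> * SH * f x, bHM * \<rho> * SH * f' * y],
            vector [bMH * f x, - \<mu>, bMH * f' * x],
            vector [k, 0, - k]]"
    using equilibrium(1) by simp
  then show ?thesis
    using is_eigenvalue_char_cubic[OF equilibrium(4) t1 t2] by simp
qed

lemma hurwitz_threshold:
  fixes \<gamma> \<mu> \<delta> k :: real
  assumes "\<gamma> > 0" "\<mu> > 0" "\<delta> > 0" "k > 0"
  defines "kc \<equiv> - (\<gamma> * \<delta> * (\<gamma> - \<mu>) + (\<gamma> + \<mu>)\<^sup>2) / (\<gamma> + \<mu> + \<gamma> * \<delta>)"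
  shows "2 * \<mu> * k * \<gamma> * \<delta> < (\<gamma> + \<mu> + k) * (k * (\<gamma> + \<mu> + \<gamma> * \<delta>)) \<longleftrightarrow> kc < k"
    and "2 * \<mu> * k * \<gamma> * \<delta> = (\<gamma> + \<mu> + k) * (k * (\<gamma> + \<mu> + \<gamma> * \<delta>)) \<longleftrightarrow> k = kc"
    and "(\<gamma> + \<mu> + k) * (k * (\<gamma> + \<mu> + \<gamma> * \<delta>)) < 2 * \<mu> * k * \<gamma> * \<delta> \<longleftrightarrow> k < kc"
proof -
  define E where "E = \<gamma> + \<mu> + \<gamma> * \<delta>"
  have "E > 0"
    using assms(1-3) by (simp add: E_def add_pos_pos)
  then have "k * E > 0"
    using assms(4) by simp
  have kcE: "kc * E = - (\<gamma> * \<delta> * (\<gamma> - \<mu>) + (\<gamma> + \<mu>)\<^sup>2)"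
    using \<open>E > 0\<close> by (simp add: kc_def E_def)
  have "k * E * (k - kc) = k * (k * E) - k * (kc * E)"
    by (simp add: algebra_simps)
  also have "\<dots> = (\<gamma> + \<mu> + k) * (k * E) - 2 * \<mu> * k * \<gamma> * \<delta>"
    unfolding kcE by (simp add: E_def algebra_simps power2_eq_square)
  finally have diff: "(\<gamma> + \<mu> + k) * (k * E) - 2 * \<mu> * k * \<gamma> * \<delta> = k * E * (k - kc)" ..
  have "2 * \<mu> * k * \<gamma> * \<delta> < (\<gamma> + \<mu> + k) * (k * E) \<longleftrightarrow> 0 < k * E * (k - kc)"
    unfolding diff[symmetric] by simp
  then show less: "2 * \<mu> * k * \<gamma> * \<delta> < (\<gamma> + \<mu> + k) * (k * (\<gamma> + \<mu> + \<gamma> * \<delta>)) \<longleftrightarrow> kc < k"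
    using \<open>k * E > 0\<close> by (simp add: E_def[symmetric] zero_less_mult_iff)
  have "2 * \<mu> * k * \<gamma> * \<delta> = (\<gamma> + \<mu> + k) * (k * E) \<longleftrightarrow> k * E * (k - kc) = 0"
    unfolding diff[symmetric] by linarith
  then show "2 * \<mu> * k * \<gamma> * \<delta> = (\<gamma> + \<mu> + k) * (k * (\<gamma> + \<mu> + \<gamma> * \<delta>)) \<longleftrightarrow> k = kc"
    using \<open>E > 0\<close> \<open>k > 0\<close> by (simp add: E_def[symmetric])
  then show "(\<gamma> + \<mu> + k) * (k * (\<gamma> + \<mu> + \<gamma> * \<delta>)) < 2 * \<mu> * k * \<gamma> * \<delta> \<longleftrightarrow> k < kc"
    using less by linarith
qed

lemma char_cubic_stability:
  fixes A :: "real^3^3"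
  assumes "\<gamma> > 0" "\<mu> > 0" "\<delta> > 0" "k > 0"
    and eig: "\<And>z. is_eigenvalue A z
      \<longleftrightarrow> monic_cubic (\<gamma> + \<mu> + k) (k * (\<gamma> + \<mu> + \<gamma> * \<delta>)) (2 * \<mu> * k * \<gamma> * \<delta>) z = 0"
  defines "kc \<equiv> - (\<gamma> * \<delta> * (\<gamma> - \<mu>) + (\<gamma> + \<mu>)\<^sup>2) / (\<gamma> + \<mu> + \<gamma> * \<delta>)"
    and "P \<equiv> monic_cubic (\<gamma> + \<mu> + k) (k * (\<gamma> + \<mu> + \<gamma> * \<delta>)) (2 * \<mu> * k * \<gamma> * \<delta>) :: complex \<Rightarrow> complex"
  shows "lin_asympt_stable A \<longleftrightarrow> kc < k"
    and "k = kc \<longrightarrow> (\<exists>r \<omega>. r < 0 \<and> \<omega> > 0 \<and>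
      {z. P z = 0} = {complex_of_real r, \<i> * of_real \<omega>, - \<i> * of_real \<omega>})" (is "_ \<longrightarrow> ?critical")
    and "k < kc \<longrightarrow> lin_unstable A \<and> (\<exists>r \<alpha> \<beta>. r < 0 \<and> \<alpha> > 0 \<and> \<beta> > 0 \<and>
      {z. P z = 0} = {complex_of_real r, Complex \<alpha> \<beta>, Complex \<alpha> (- \<beta>)})" (is "_ \<longrightarrow> _ \<and> ?unstable")
proof -
  have pos: "\<gamma> + \<mu> + k > 0" "k * (\<gamma> + \<mu> + \<gamma> * \<delta>) > 0" "2 * \<mu> * k * \<gamma> * \<delta> > 0"
    using assms(1-4) by (simp_all add: add_pos_pos)
  note threshold = hurwitz_threshold[OF assms(1-4), folded kc_def]
  show "lin_asympt_stable A \<longleftrightarrow> kc < k"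
    unfolding lin_asympt_stable_def eig monic_cubic_stable_iff[OF pos] threshold ..
  show "k = kc \<longrightarrow> ?critical"
  proof
    assume "k = kc"
    then show ?critical
      unfolding P_def by (intro monic_cubic_roots_imaginary_pair[OF pos] threshold(2)[THEN iffD2])
  qed
  show "k < kc \<longrightarrow> lin_unstable A \<and> ?unstable"
  proof
    assume "k < kc"
    then obtain r \<alpha> \<beta> where "r < 0" "\<alpha> > 0" "\<beta> > 0"
      and roots: "{z. P z = 0} = {complex_of_real r, Complex \<alpha> \<beta>, Complex \<alpha> (- \<beta>)}"
      using monic_cubic_roots_unstable_pair[OF pos] threshold(3) unfolding P_def by blast
    then have "is_eigenvalue A (Complex \<alpha> \<beta>)"
      unfolding eig P_def[symmetric] by blast
    with \<open>\<alpha> > 0\<close> have "lin_unstable A"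
      unfolding lin_unstable_def by (intro exI[of _ "Complex \<alpha> \<beta>"]) simp
    with \<open>r < 0\<close> \<open>\<alpha> > 0\<close> \<open>\<beta> > 0\<close> roots show "lin_unstable A \<and> ?unstable"
      by blast
  qed
qed

theorem mainTheorem14:
  fixes a w a' w' :: "real \<Rightarrow> real"
    and q l SH bHM bMH \<rho> \<gamma> \<mu> k IH IM J :: real
  assumes a_deriv: "\<And>x. x \<ge> 0 \<Longrightarrow> (a has_real_derivative a' x) (at x within {0..})"
    and w_deriv: "\<And>x. x \<ge> 0 \<Longrightarrow> (w has_real_derivative w' x) (at x within {0..})"
    and a'_cont: "continuous_on {0..} a'"
    and w'_cont: "continuous_on {0..} w'"
    and a_pos: "\<And>x. x \<ge> 0 \<Longrightarrow> a x > 0"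
    and w_pos: "\<And>x. x \<ge> 0 \<Longrightarrow> w x > 0"
    and a'_pos: "\<And>x. x \<ge> 0 \<Longrightarrow> a' x > 0"
    and w'_nonpos: "\<And>x. x \<ge> 0 \<Longrightarrow> w' x \<le> 0"
    and q: "0 \<le> q" "q < 1"
    and l: "l \<ge> 0"
    and SH: "SH > 0"
    and params: "bHM > 0" "bMH > 0" "\<rho> > 0" "\<gamma> > 0" "\<mu> > 0"
    and R0: "Rhat_e bHM bMH \<gamma> \<mu> \<rho> SH * h_fun l (p_fun a w 0) q > 1"
    and k: "k > 0"
    and equil: "fieldO (f_fun a w q l) bHM bMH \<rho> SH \<gamma> \<mu> k (vector [IH, IM, J]) = 0"
    and IH_pos: "IH > 0"
  shows
    "let f = f_fun a w q l;
         R = Rhat_e bHM bMH \<gamma> \<mu> \<rho> SH;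
         \<delta> = - deriv f IH * R * IH;
         A = jacobian_at (fieldO f bHM bMH \<rho> SH \<gamma> \<mu> k) (vector [IH, IM, J]);
         P = (\<lambda>z::complex. z ^ 3 + of_real (\<gamma> + \<mu> + k) * z ^ 2
                + of_real (k * (\<gamma> + \<mu> + \<gamma> * \<delta>)) * z + of_real (2 * \<mu> * k * \<gamma> * \<delta>));
         kc = - (\<gamma> * \<delta> * (\<gamma> - \<mu>) + (\<gamma> + \<mu>)\<^sup>2) / (\<gamma> + \<mu> + \<gamma> * \<delta>)
     in \<delta> > 0
      \<and> (\<forall>z. is_eigenvalue A z \<longleftrightarrow> P z = 0)
      \<and> (lin_asympt_stable A \<longleftrightarrow> k > kc)
      \<and> (k = kc \<longrightarrow> (\<exists>r \<omega>. r < 0 \<and> \<omega> > 0 \<and>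
              {z. P z = 0} = {complex_of_real r, \<i> * of_real \<omega>, - \<i> * of_real \<omega>}))
      \<and> (k < kc \<longrightarrow> lin_unstable A \<and> (\<exists>r \<alpha> \<beta>. r < 0 \<and> \<alpha> > 0 \<and> \<beta> > 0 \<and>
              {z. P z = 0} = {complex_of_real r, Complex \<alpha> \<beta>, Complex \<alpha> (- \<beta>)}))"
proof -
  define f R where "f = f_fun a w q l" and "R = Rhat_e bHM bMH \<gamma> \<mu> \<rho> SH"
  define \<delta> where "\<delta> = - deriv f IH * R * IH"
  have at_IH: "at IH within {0..} = at IH"
    by (rule at_within_interior) (simp add: interior_real_atLeast IH_pos)
  note a'_IH = a_deriv[OF less_imp_le[OF IH_pos], unfolded at_IH]
    and w'_IH = w_deriv[OF less_imp_le[OF IH_pos], unfolded at_IH]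
  have IH_signs: "a IH > 0" "w IH > 0" "a' IH > 0" "w' IH \<le> 0"
    using a_pos w_pos a'_pos w'_nonpos IH_pos by simp_all
  have f_IH: "f IH > 0"
    unfolding f_def using f_fun_pos[of a IH w q l, OF IH_signs(1,2) q(1) l] .
  note equilibrium = fieldO_equilibrium[OF params(1-3) SH params(4,5) k equil[folded f_def] IH_pos f_IH]
  have "l \<noteq> 0"
    using l_nonzero_if_above_threshold[OF IH_signs(1,2) a_pos[of 0] w_pos[of 0] q(1)] equilibrium(5) R0
    by (simp add: f_def)
  then have f': "(f has_real_derivative deriv f IH) (at IH)" "deriv f IH < 0"
    unfolding f_def using f_fun_deriv_neg[OF a'_IH w'_IH IH_signs q] l by simp_all
  moreover have "R > 0"
    using params SH by (simp add: R_def Rhat_e_def)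
  ultimately have "\<delta> > 0"
    using IH_pos by (simp add: \<delta>_def mult_neg_pos)
  note eig = equilibrium_eigenvalue_iff[OF params(1-3) SH params(4,5) k equil[folded f_def] IH_pos f_IH f'(1),
      folded R_def, folded \<delta>_def]
  show ?thesis
    unfolding Let_def f_def[symmetric] R_def[symmetric] \<delta>_def[symmetric] monic_cubic_def[symmetric]
    using \<open>\<delta> > 0\<close> eig char_cubic_stability[OF params(4,5) \<open>\<delta> > 0\<close> k eig] by simp
qed

end
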